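(* The map $n\mapsto nXn^{-1}-X$ induces an isomorphism from $N_X\backslash N$ onto $\mathfrak{u}_X$.
   Context: Let $E/F$ be a quadratic extension of number fields with nontrivial automorphism $\sigma$. Let $r\ge1$ and $d_1,\dots,d_r\ge0$ be integers, and let $V_F$ be an $F$-vector space with basis $(e^i_{k,j})_{1\le i\le j\le r,\,1\le k\le d_j}$; $V=V_F\otimes_FE$, $V^i_j$ the $E$-span of $(e^i_{k,j})_k$, so $V=\bigoplus_{1\le i\le j\le r}V^i_j$. Let $\mathfrak{s}$ be the $F$-space of $\sigma$-linear endomorphisms of $V$ (i.e. $X(\lambda v)=\sigma(\lambda)X(v)$), and $H=\mathrm{Res}_{E/F}GL_E(V)$ acting on $\mathfrak{s}$ by conjugation. Let $X\in\mathfrak{s}$ be the $\sigma$-linear map with $Xe^i_{k,j}=e^{i-1}_{k,j}$ for $i>1$ and $Xe^1_{k,j}=0$; let $H_X$ be its centralizer in $H$. Let $\mathfrak{n}=\bigoplus\mathrm{Hom}_E(V^i_j,V^{i'}_{j'})$, sum over pairs with $i>i'$ or ($i=i'$ and $j<j'$), let $N$ be the unipotent $F$-subgroup of $H$ with Lie algebra $\mathfrak{n}$ (i.e. $N=1+\mathfrak{n}$), and $N_X=N\cap H_X$. Let $\mathfrak{u}_X$ be the set of $Y\in\mathfrak{s}$ whose block component from $V^i_j$ to $V^{i'}_{j'}$ is zero except when $1<i$ and ($i-1>i'$ or ($i=i'+1$ and $j<j'$)). All objects are viewed as $F$-varieties. *)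

theory Defs
  imports Main "HOL-Library.Product_Plus"
begin

(* Functor-of-points model.  F is a field of characteristic 0 (standing in for the
   number field), E = F(sqrt delta) with delta a non-square in F, and R is a
   commutative F-algebra (structure map iota).  Then E \<otimes>_F R = R[t]/(t^2 - iota delta);
   an element a + b t is represented by the pair (a,b), and sigma \<otimes> id is (a,b) \<mapsto> (a,-b).
   Below, c stands for iota delta. *)

type_synonym 'r ER = "'r \<times> 'r"

definition emul :: "'r::comm_ring_1 \<Rightarrow> 'r ER \<Rightarrow> 'r ER \<Rightarrow> 'r ER" where
  "emul c x y = (fst x * fst y + c * snd x * snd y, fst x * snd y + snd x * fst y)"

definition esig :: "'r::comm_ring_1 ER \<Rightarrow> 'r ER" where
  "esig x = (fst x, - snd x)"

definition eone :: "'r::comm_ring_1 ER" where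
  "eone = (1, 0)"

(* Basis index: (i,j,k) stands for e^i_{k,j}, with 1 <= i <= j <= r, 1 <= k <= d j. *)
definition Idx :: "nat \<Rightarrow> (nat \<Rightarrow> nat) \<Rightarrow> (nat \<times> nat \<times> nat) set" where
  "Idx r d = {(i,j,k). 1 \<le> i \<and> i \<le> j \<and> j \<le> r \<and> 1 \<le> k \<and> k \<le> d j}"

(* A matrix A over E\<otimes>R: entry A p q is the e_p-coefficient of the image of e_q.
   An E-linear map h has matrix h; a sigma-linear map Y has matrix A with Y v = A * sigma(v). *)
type_synonym 'r mat = "(nat \<times> nat \<times> nat) \<Rightarrow> (nat \<times> nat \<times> nat) \<Rightarrow> 'r ER"

definition supp_ok :: "nat \<Rightarrow> (nat \<Rightarrow> nat) \<Rightarrow> 'r::comm_ring_1 mat \<Rightarrow> bool" where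
  "supp_ok r d A = (\<forall>p q. (p \<notin> Idx r d \<or> q \<notin> Idx r d) \<longrightarrow> A p q = 0)"

definition mat_mul :: "nat \<Rightarrow> (nat \<Rightarrow> nat) \<Rightarrow> 'r::comm_ring_1 \<Rightarrow> 'r mat \<Rightarrow> 'r mat \<Rightarrow> 'r mat" where
  "mat_mul r d c A B = (\<lambda>p q. if p \<in> Idx r d \<and> q \<in> Idx r d
      then (\<Sum>m\<in>Idx r d. emul c (A p m) (B m q)) else 0)"

definition mat_one :: "nat \<Rightarrow> (nat \<Rightarrow> nat) \<Rightarrow> 'r::comm_ring_1 mat" where
  "mat_one r d = (\<lambda>p q. if p = q \<and> p \<in> Idx r d then eone else 0)"

definition mat_sig :: "'r::comm_ring_1 mat \<Rightarrow> 'r mat" where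
  "mat_sig A = (\<lambda>p q. esig (A p q))"

definition mat_minus :: "'r::comm_ring_1 mat \<Rightarrow> 'r mat \<Rightarrow> 'r mat" where
  "mat_minus A B = (\<lambda>p q. A p q - B p q)"

definition mat_inv :: "nat \<Rightarrow> (nat \<Rightarrow> nat) \<Rightarrow> 'r::comm_ring_1 \<Rightarrow> 'r mat \<Rightarrow> 'r mat" where
  "mat_inv r d c h = (SOME B. supp_ok r d B \<and> mat_mul r d c h B = mat_one r d
                                \<and> mat_mul r d c B h = mat_one r d)"

(* Conjugation of the sigma-linear map with matrix A by h \<in> GL(V):
   h o Y o h^{-1} has matrix h * A * sigma(h^{-1}). *)
definition conj :: "nat \<Rightarrow> (nat \<Rightarrow> nat) \<Rightarrow> 'r::comm_ring_1 \<Rightarrow> 'r mat \<Rightarrow> 'r mat \<Rightarrow> 'r mat" where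
  "conj r d c h A = mat_mul r d c (mat_mul r d c h A) (mat_sig (mat_inv r d c h))"

definition Xmat :: "nat \<Rightarrow> (nat \<Rightarrow> nat) \<Rightarrow> 'r::comm_ring_1 mat" where
  "Xmat r d = (\<lambda>p q. if p \<in> Idx r d \<and> q \<in> Idx r d \<and> fst q > 1
                        \<and> p = (fst q - 1, snd q) then eone else 0)"

(* block Hom(V^i_j, V^i'_j') lies in n : i > i' or (i = i' and j < j');
   q = source index, p = target index *)
definition n_block :: "nat \<times> nat \<times> nat \<Rightarrow> nat \<times> nat \<times> nat \<Rightarrow> bool" where
  "n_block q p = (case q of (i,j,_) \<Rightarrow> case p of (i',j',_) \<Rightarrow>
                     i > i' \<or> (i = i' \<and> j < j'))"

definition u_block :: "nat \<times> nat \<times> nat \<Rightarrow> nat \<times> nat \<times> nat \<Rightarrow> bool" where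
  "u_block q p = (case q of (i,j,_) \<Rightarrow> case p of (i',j',_) \<Rightarrow>
                     1 < i \<and> (i - 1 > i' \<or> (i = i' + 1 \<and> j < j')))"

definition N_pts :: "nat \<Rightarrow> (nat \<Rightarrow> nat) \<Rightarrow> 'r::comm_ring_1 mat set" where
  "N_pts r d = {n. supp_ok r d n \<and> (\<forall>p\<in>Idx r d. n p p = eone)
       \<and> (\<forall>p\<in>Idx r d. \<forall>q\<in>Idx r d. p \<noteq> q \<and> \<not> n_block q p \<longrightarrow> n p q = 0)}"

definition NX_pts :: "nat \<Rightarrow> (nat \<Rightarrow> nat) \<Rightarrow> 'r::comm_ring_1 \<Rightarrow> 'r mat set" where
  "NX_pts r d c = {n \<in> N_pts r d. conj r d c n (Xmat r d) = Xmat r d}"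

definition uX_pts :: "nat \<Rightarrow> (nat \<Rightarrow> nat) \<Rightarrow> 'r::comm_ring_1 mat set" where
  "uX_pts r d = {Y. supp_ok r d Y
       \<and> (\<forall>p\<in>Idx r d. \<forall>q\<in>Idx r d. \<not> u_block q p \<longrightarrow> Y p q = 0)}"

definition phi :: "nat \<Rightarrow> (nat \<Rightarrow> nat) \<Rightarrow> 'r::comm_ring_1 \<Rightarrow> 'r mat \<Rightarrow> 'r mat" where
  "phi r d c n = mat_minus (conj r d c n (Xmat r d)) (Xmat r d)"

end

theory Submission
  imports Defs
begin

(* Order the basis vectors by i, and for equal i by decreasing j (idx_less). Then N consists
   of the unitriangular matrices for this order; it is closed under products, and under
   inverses via the finite Neumann series of its nilpotent part. As N_X is the stabiliser of
   X in N, the fibres of n \<mapsto> n X n^-1 - X are the cosets n N_X. For n in N, the entries of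
   n X sigma(n^-1) outside the u_X blocks equal those of X by triangularity.
   Conversely, for Y in u_X put Z = X + Y and solve n X = Z sigma(n) column by column: the column
   of n at e^i_{k,j} must be (Z sigma)^(j-i) e^j_{k,j}. Since Y strictly lowers i and is
   triangular, these are unitriangular columns, and Z sigma annihilates the one at e^1_{k,j},
   which is the equation at the columns killed by X. *)

section \<open>Matrices over E \<otimes> R\<close>

lemma finite_Idx: "finite (Idx r d)"
proof -
  have "Idx r d \<subseteq> {..r} \<times> {..r} \<times> {..(\<Sum>j\<le>r. d j)}"
  proof
    fix x assume "x \<in> Idx r d"
    then obtain i j k where x: "x = (i,j,k)" "i \<le> j" "j \<le> r" "k \<le> d j"
      by (auto simp: Idx_def)
    have "d j \<le> (\<Sum>j\<le>r. d j)" using x(3) by (intro member_le_sum) auto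
    with x show "x \<in> {..r} \<times> {..r} \<times> {..(\<Sum>j\<le>r. d j)}" by auto
  qed
  then show ?thesis by (rule finite_subset) auto
qed

lemma emul_assoc: "emul c (emul c x y) z = emul c x (emul c y z)"
  by (simp add: emul_def algebra_simps)

lemma emul_add_left: "emul c (x + y) z = emul c x z + emul c y z"
  by (simp add: emul_def algebra_simps)

lemma emul_diff_left: "emul c (x - y) z = emul c x z - emul c y z"
  by (simp add: emul_def algebra_simps)

lemma emul_0_left [simp]: "emul c 0 x = 0"
  by (simp add: emul_def zero_prod_def)

lemma emul_0_right [simp]: "emul c x 0 = 0"
  by (simp add: emul_def zero_prod_def)

lemma emul_one_left [simp]: "emul c eone x = x"
  by (simp add: emul_def eone_def)

lemma emul_one_right [simp]: "emul c x eone = x"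
  by (simp add: emul_def eone_def)

lemma emul_sum_right: "emul c x (\<Sum>i\<in>A. f i) = (\<Sum>i\<in>A. emul c x (f i))"
  by (simp add: emul_def fst_sum snd_sum prod_eq_iff sum_distrib_left sum.distrib algebra_simps)

lemma emul_sum_left: "emul c (\<Sum>i\<in>A. f i) x = (\<Sum>i\<in>A. emul c (f i) x)"
  by (simp add: emul_def fst_sum snd_sum prod_eq_iff sum_distrib_left sum_distrib_right sum.distrib algebra_simps)

lemma emul_neq_0D: "emul c x y \<noteq> 0 \<Longrightarrow> x \<noteq> 0 \<and> y \<noteq> 0"
  by auto

lemma esig_emul: "esig (emul c x y) = emul c (esig x) (esig y)"
  by (simp add: emul_def esig_def algebra_simps)

lemma esig_0 [simp]: "esig 0 = 0"
  by (simp add: esig_def zero_prod_def)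

lemma esig_eone [simp]: "esig eone = eone"
  by (simp add: esig_def eone_def)

lemma esig_eq_0_iff [simp]: "esig x = 0 \<longleftrightarrow> x = 0"
  by (cases x) (simp add: esig_def zero_prod_def)

lemma eone_neq_0 [simp]: "(eone :: 'r::comm_ring_1 ER) \<noteq> 0"
  by (simp add: eone_def zero_prod_def)

lemma esig_sum: "esig (\<Sum>x\<in>A. f x) = (\<Sum>x\<in>A. esig (f x))"
  by (simp add: esig_def fst_sum snd_sum sum_negf prod_eq_iff)

lemma sum_neq_0_obtain:
  assumes "(\<Sum>x\<in>A. f x) \<noteq> (0 :: 'a::comm_monoid_add)"
  obtains x where "x \<in> A" "f x \<noteq> 0"
  using assms sum.not_neutral_contains_not_neutral by blast

lemma supp_okD: "supp_ok r d A \<Longrightarrow> A p q \<noteq> 0 \<Longrightarrow> p \<in> Idx r d \<and> q \<in> Idx r d"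
  unfolding supp_ok_def by blast

lemma supp_ok_mat_mul: "supp_ok r d (mat_mul r d c A B)"
  by (simp add: supp_ok_def mat_mul_def)

lemma supp_ok_mat_one: "supp_ok r d (mat_one r d)"
  by (simp add: supp_ok_def mat_one_def)

lemma supp_ok_mat_minus: "supp_ok r d A \<Longrightarrow> supp_ok r d B \<Longrightarrow> supp_ok r d (mat_minus A B)"
  by (simp add: supp_ok_def mat_minus_def)

lemma supp_ok_Xmat: "supp_ok r d (Xmat r d)"
  by (simp add: supp_ok_def Xmat_def)

lemma mat_mul_assoc:
  "mat_mul r d c (mat_mul r d c A B) C = mat_mul r d c A (mat_mul r d c B C)"
proof (intro ext)
  fix p q
  show "mat_mul r d c (mat_mul r d c A B) C p q = mat_mul r d c A (mat_mul r d c B C) p q"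
  proof (cases "p \<in> Idx r d \<and> q \<in> Idx r d")
    case True
    have "mat_mul r d c (mat_mul r d c A B) C p q
        = (\<Sum>m\<in>Idx r d. \<Sum>l\<in>Idx r d. emul c (emul c (A p l) (B l m)) (C m q))"
      using True by (simp add: mat_mul_def emul_sum_left)
    also have "\<dots> = (\<Sum>l\<in>Idx r d. \<Sum>m\<in>Idx r d. emul c (A p l) (emul c (B l m) (C m q)))"
      by (subst sum.swap) (simp add: emul_assoc)
    also have "\<dots> = mat_mul r d c A (mat_mul r d c B C) p q"
      using True by (simp add: mat_mul_def emul_sum_right)
    finally show ?thesis .
  qed (auto simp: mat_mul_def)
qed

lemma sum_Idx_delta:
  "q \<in> Idx r d \<Longrightarrow> (\<Sum>m\<in>Idx r d. if m = q then x else 0) = x"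
  using finite_Idx by (simp add: sum.delta')

lemma mat_mul_one_left:
  assumes "supp_ok r d A" shows "mat_mul r d c (mat_one r d) A = A"
proof (intro ext)
  fix p q
  show "mat_mul r d c (mat_one r d) A p q = A p q"
  proof (cases "p \<in> Idx r d \<and> q \<in> Idx r d")
    case True
    then have "mat_mul r d c (mat_one r d) A p q = (\<Sum>m\<in>Idx r d. if m = p then A p q else 0)"
      by (auto simp: mat_mul_def mat_one_def intro!: sum.cong)
    with True show ?thesis by (simp add: sum_Idx_delta)
  qed (use supp_okD[OF assms, of p q] in \<open>auto simp: mat_mul_def\<close>)
qed

lemma mat_mul_one_right:
  assumes "supp_ok r d A" shows "mat_mul r d c A (mat_one r d) = A"
proof (intro ext)
  fix p q
  show "mat_mul r d c A (mat_one r d) p q = A p q"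
  proof (cases "p \<in> Idx r d \<and> q \<in> Idx r d")
    case True
    then have "mat_mul r d c A (mat_one r d) p q = (\<Sum>m\<in>Idx r d. if m = q then A p q else 0)"
      by (auto simp: mat_mul_def mat_one_def intro!: sum.cong)
    with True show ?thesis by (simp add: sum_Idx_delta)
  qed (use supp_okD[OF assms, of p q] in \<open>auto simp: mat_mul_def\<close>)
qed

lemma mat_sig_mul: "mat_sig (mat_mul r d c A B) = mat_mul r d c (mat_sig A) (mat_sig B)"
  by (intro ext) (auto simp: mat_sig_def mat_mul_def esig_sum esig_emul)

lemma mat_sig_one: "mat_sig (mat_one r d) = (mat_one r d :: 'r::comm_ring_1 mat)"
  by (intro ext) (auto simp: mat_sig_def mat_one_def)

section \<open>The order on the basis\<close>

definition idx_less :: "nat \<times> nat \<times> nat \<Rightarrow> nat \<times> nat \<times> nat \<Rightarrow> bool" where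
  "idx_less p q \<longleftrightarrow> fst p < fst q \<or> (fst p = fst q \<and> fst (snd q) < fst (snd p))"

definition idx_down :: "nat \<times> nat \<times> nat \<Rightarrow> nat \<times> nat \<times> nat" where
  "idx_down q = (fst q - 1, snd q)"

definition idx_up :: "nat \<times> nat \<times> nat \<Rightarrow> nat \<times> nat \<times> nat" where
  "idx_up p = (fst p + 1, snd p)"

lemma idx_down_up [simp]: "idx_down (idx_up p) = p"
  by (simp add: idx_down_def idx_up_def)

lemma idx_up_down: "1 < fst q \<Longrightarrow> idx_up (idx_down q) = q"
  by (simp add: idx_down_def idx_up_def)

lemma n_block_iff_idx_less: "n_block q p \<longleftrightarrow> idx_less p q"
  by (cases p; cases q) (auto simp: n_block_def idx_less_def)

lemma u_block_iff_idx_less: "u_block q p \<longleftrightarrow> 1 < fst q \<and> idx_less p (idx_down q)"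
  by (cases p; cases q) (auto simp: u_block_def idx_less_def idx_down_def)

lemma idx_less_fst_le: "idx_less p q \<Longrightarrow> fst p \<le> fst q"
  by (auto simp: idx_less_def)

lemma idx_less_trans: "idx_less p q \<Longrightarrow> idx_less q s \<Longrightarrow> idx_less p s"
  by (auto simp: idx_less_def)

lemma idx_less_irrefl: "\<not> idx_less p p"
  by (simp add: idx_less_def)

lemma idx_less_down: "idx_less l q \<Longrightarrow> 1 < fst l \<Longrightarrow> idx_less (idx_down l) (idx_down q)"
  by (auto simp: idx_less_def idx_down_def)

lemma idx_down_in_Idx: "q \<in> Idx r d \<Longrightarrow> 1 < fst q \<Longrightarrow> idx_down q \<in> Idx r d"
  by (cases q) (auto simp: Idx_def idx_down_def)

definition idx_rank :: "nat \<Rightarrow> nat \<times> nat \<times> nat \<Rightarrow> nat" where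
  "idx_rank r p = fst p * (r + 1) + (r - fst (snd p))"

lemma idx_rank_less:
  assumes "p \<in> Idx r d" "q \<in> Idx r d" "idx_less p q"
  shows "idx_rank r p < idx_rank r q"
proof (cases "fst p < fst q")
  case True
  then have "fst p * (r + 1) + (r + 1) \<le> fst q * (r + 1)"
    by (metis Suc_leI add.commute mult_Suc mult_le_mono1 plus_1_eq_Suc)
  then show ?thesis unfolding idx_rank_def by linarith
next
  case False
  then show ?thesis using assms by (auto simp: idx_rank_def idx_less_def Idx_def)
qed

lemma idx_rank_bound:
  assumes "p \<in> Idx r d" shows "idx_rank r p < (r + 1) * (r + 1)"
proof -
  have "fst p * (r + 1) \<le> r * (r + 1)" using assms by (intro mult_le_mono1) (auto simp: Idx_def)
  then show ?thesis unfolding idx_rank_def by simp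
qed

section \<open>The unipotent group N\<close>

lemma N_pts_diag: "n \<in> N_pts r d \<Longrightarrow> p \<in> Idx r d \<Longrightarrow> n p p = eone"
  by (simp add: N_pts_def)

lemma N_pts_supp_ok: "n \<in> N_pts r d \<Longrightarrow> supp_ok r d n"
  by (simp add: N_pts_def)

lemma N_pts_nonzeroD:
  assumes "n \<in> N_pts r d" "n p q \<noteq> 0"
  shows "p \<in> Idx r d \<and> q \<in> Idx r d \<and> (p = q \<or> idx_less p q)"
  using assms supp_okD[of r d n p q] unfolding N_pts_def n_block_iff_idx_less by blast

lemma N_ptsI:
  assumes "supp_ok r d n" "\<And>p. p \<in> Idx r d \<Longrightarrow> n p p = eone"
    and "\<And>p q. n p q \<noteq> 0 \<Longrightarrow> p = q \<or> idx_less p q"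
  shows "n \<in> N_pts r d"
  using assms unfolding N_pts_def n_block_iff_idx_less by blast

lemma N_pts_mul:
  assumes "n \<in> N_pts r d" "n' \<in> N_pts r d"
  shows "mat_mul r d c n n' \<in> N_pts r d"
proof (rule N_ptsI)
  fix p assume p: "p \<in> Idx r d"
  have "emul c (n p m) (n' m p) = (if m = p then eone else 0)" if "m \<in> Idx r d" for m
  proof (cases "m = p")
    case False
    then have "n p m = 0 \<or> n' m p = 0"
      using N_pts_nonzeroD[OF assms(1), of p m] N_pts_nonzeroD[OF assms(2), of m p]
        idx_less_trans idx_less_irrefl by blast
    with False show ?thesis by auto
  qed (use N_pts_diag[OF assms(1) p] N_pts_diag[OF assms(2) p] in simp)
  with p show "mat_mul r d c n n' p p = eone"
    by (simp add: mat_mul_def sum_Idx_delta cong: sum.cong)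
next
  fix p q assume "mat_mul r d c n n' p q \<noteq> 0"
  then obtain m where "emul c (n p m) (n' m q) \<noteq> 0"
    by (auto simp: mat_mul_def split: if_splits elim: sum_neq_0_obtain)
  then have "n p m \<noteq> 0" "n' m q \<noteq> 0" by auto
  then show "p = q \<or> idx_less p q"
    using N_pts_nonzeroD[OF assms(1), of p m] N_pts_nonzeroD[OF assms(2), of m q] idx_less_trans
    by blast
qed (rule supp_ok_mat_mul)

definition mat_pow :: "nat \<Rightarrow> (nat \<Rightarrow> nat) \<Rightarrow> 'r::comm_ring_1 \<Rightarrow> 'r mat \<Rightarrow> nat \<Rightarrow> 'r mat" where
  "mat_pow r d c A t = (mat_mul r d c A ^^ t) (mat_one r d)"

lemma mat_pow_0: "mat_pow r d c A 0 = mat_one r d"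
  by (simp add: mat_pow_def)

lemma mat_pow_Suc: "mat_pow r d c A (Suc t) = mat_mul r d c A (mat_pow r d c A t)"
  by (simp add: mat_pow_def)

lemma supp_ok_mat_pow: "supp_ok r d (mat_pow r d c A t)"
  by (cases t) (simp_all add: mat_pow_0 mat_pow_Suc supp_ok_mat_one supp_ok_mat_mul)

definition strictly_upper :: "nat \<Rightarrow> (nat \<Rightarrow> nat) \<Rightarrow> 'r::comm_ring_1 mat \<Rightarrow> bool" where
  "strictly_upper r d A \<longleftrightarrow> (\<forall>p q. A p q \<noteq> 0 \<longrightarrow> p \<in> Idx r d \<and> q \<in> Idx r d \<and> idx_less p q)"

lemma mat_pow_strictly_upper_nonzeroD:
  assumes "strictly_upper r d A" "mat_pow r d c A t p q \<noteq> 0"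
  shows "p \<in> Idx r d \<and> q \<in> Idx r d \<and> (if t = 0 then p = q else idx_less p q)
         \<and> idx_rank r p + t \<le> idx_rank r q"
  using assms(2)
proof (induction t arbitrary: p)
  case 0
  then show ?case by (auto simp: mat_pow_0 mat_one_def split: if_splits)
next
  case (Suc t)
  then obtain m where "m \<in> Idx r d" "emul c (A p m) (mat_pow r d c A t m q) \<noteq> 0"
    by (auto simp: mat_pow_Suc mat_mul_def split: if_splits elim: sum_neq_0_obtain)
  then have pm: "p \<in> Idx r d" "idx_less p m" and "mat_pow r d c A t m q \<noteq> 0"
    using assms(1) unfolding strictly_upper_def by (blast dest: emul_neq_0D)+
  from Suc.IH[OF this(3)] have mq: "m \<in> Idx r d" "q \<in> Idx r d"
    "if t = 0 then m = q else idx_less m q" "idx_rank r m + t \<le> idx_rank r q"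
    by blast+
  have "idx_less p q" using pm(2) mq(3) by (cases "t = 0") (auto intro: idx_less_trans)
  moreover have "idx_rank r p < idx_rank r m" using pm mq by (intro idx_rank_less)
  ultimately show ?case using pm mq by simp
qed

lemma mat_pow_strictly_upper_nilpotent:
  assumes "strictly_upper r d A"
  shows "mat_pow r d c A ((r + 1) * (r + 1)) = (\<lambda>p q. 0)"
proof (intro ext, rule ccontr)
  fix p q assume "mat_pow r d c A ((r + 1) * (r + 1)) p q \<noteq> 0"
  from mat_pow_strictly_upper_nonzeroD[OF assms this] idx_rank_bound[of q r d]
  show False by auto
qed

definition neg_offdiag :: "'r::comm_ring_1 mat \<Rightarrow> 'r mat" where
  "neg_offdiag n = (\<lambda>p q. if p = q then 0 else - n p q)"

definition neumann_inv :: "nat \<Rightarrow> (nat \<Rightarrow> nat) \<Rightarrow> 'r::comm_ring_1 \<Rightarrow> 'r mat \<Rightarrow> 'r mat" where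
  "neumann_inv r d c n =
     (\<lambda>p q. \<Sum>t<(r + 1) * (r + 1). mat_pow r d c (neg_offdiag n) t p q)"

lemma strictly_upper_neg_offdiag:
  assumes "n \<in> N_pts r d" shows "strictly_upper r d (neg_offdiag n)"
  unfolding strictly_upper_def
proof (intro allI impI)
  fix p q assume "neg_offdiag n p q \<noteq> 0"
  then have "p \<noteq> q" "n p q \<noteq> 0" by (auto simp: neg_offdiag_def split: if_splits)
  then show "p \<in> Idx r d \<and> q \<in> Idx r d \<and> idx_less p q" using N_pts_nonzeroD[OF assms] by blast
qed

lemma N_pts_eq_one_minus_neg_offdiag:
  assumes "n \<in> N_pts r d" "p \<in> Idx r d"
  shows "n p q = mat_one r d p q - neg_offdiag n p q"
  using N_pts_diag[OF assms] assms(2) by (cases "p = q") (simp_all add: mat_one_def neg_offdiag_def)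

lemma mat_mul_neumann_inv:
  assumes n: "n \<in> N_pts r d"
  shows "mat_mul r d c n (neumann_inv r d c n) = mat_one r d"
proof (intro ext)
  fix p q
  let ?P = "mat_pow r d c (neg_offdiag n)"
  define K where "K = (r + 1) * (r + 1)"
  show "mat_mul r d c n (neumann_inv r d c n) p q = mat_one r d p q"
  proof (cases "p \<in> Idx r d \<and> q \<in> Idx r d")
    case True
    have step: "mat_mul r d c n (?P t) p q = ?P t p q - ?P (Suc t) p q" for t
    proof -
      have "mat_mul r d c n (?P t) p q = mat_mul r d c (mat_one r d) (?P t) p q
                                         - mat_mul r d c (neg_offdiag n) (?P t) p q"
        using True by (simp add: mat_mul_def N_pts_eq_one_minus_neg_offdiag[OF n]
            emul_diff_left sum_subtractf)
      then show ?thesis by (simp add: mat_mul_one_left supp_ok_mat_pow mat_pow_Suc)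
    qed
    have "mat_mul r d c n (neumann_inv r d c n) p q
        = (\<Sum>t<K. \<Sum>m\<in>Idx r d. emul c (n p m) (?P t m q))"
      using True unfolding mat_mul_def neumann_inv_def K_def[symmetric]
      by (simp add: emul_sum_right sum.swap[of _ "Idx r d"])
    also have "\<dots> = (\<Sum>t<K. ?P t p q - ?P (Suc t) p q)"
      using True step by (simp add: mat_mul_def)
    also have "\<dots> = ?P 0 p q - ?P K p q"
      by (rule sum_lessThan_telescope')
    also have "\<dots> = mat_one r d p q"
      using mat_pow_strictly_upper_nilpotent[OF strictly_upper_neg_offdiag[OF n]]
      by (simp add: mat_pow_0 K_def)
    finally show ?thesis .
  qed (auto simp: mat_mul_def mat_one_def)
qed

lemma neumann_inv_in_N_pts:
  assumes n: "n \<in> N_pts r d"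
  shows "neumann_inv r d c n \<in> N_pts r d"
proof (rule N_ptsI)
  let ?P = "mat_pow r d c (neg_offdiag n)"
  note powD = mat_pow_strictly_upper_nonzeroD[OF strictly_upper_neg_offdiag[OF n]]
  show "supp_ok r d (neumann_inv r d c n)"
    using supp_okD[OF supp_ok_mat_pow] unfolding supp_ok_def neumann_inv_def by (metis sum.neutral)
  fix p assume p: "p \<in> Idx r d"
  have "?P t p p = (if t = 0 then eone else 0)" for t
  proof (cases t)
    case (Suc t')
    then have "?P t p p = 0" using powD[of c t p p] idx_less_irrefl by auto
    with Suc show ?thesis by simp
  qed (simp add: mat_pow_0 mat_one_def p)
  then show "neumann_inv r d c n p p = eone"
    by (simp add: neumann_inv_def)
next
  fix p q assume "neumann_inv r d c n p q \<noteq> 0"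
  then obtain t where "mat_pow r d c (neg_offdiag n) t p q \<noteq> 0"
    unfolding neumann_inv_def by (rule sum_neq_0_obtain)
  from mat_pow_strictly_upper_nonzeroD[OF strictly_upper_neg_offdiag[OF n] this]
  show "p = q \<or> idx_less p q" by (auto split: if_splits)
qed

lemma mat_inv_eqI:
  assumes "supp_ok r d g" "mat_mul r d c h g = mat_one r d" "mat_mul r d c g h = mat_one r d"
  shows "mat_inv r d c h = g"
proof -
  let ?inv = "\<lambda>B. supp_ok r d B \<and> mat_mul r d c h B = mat_one r d \<and> mat_mul r d c B h = mat_one r d"
  have "?inv (mat_inv r d c h)"
    unfolding mat_inv_def by (rule someI[of ?inv g]) (use assms in blast)
  then have "mat_inv r d c h = mat_mul r d c (mat_inv r d c h) (mat_mul r d c h g)"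
    using assms(2) by (simp add: mat_mul_one_right)
  also have "\<dots> = g"
    using \<open>?inv (mat_inv r d c h)\<close> assms(1) by (simp add: mat_mul_assoc[symmetric] mat_mul_one_left)
  finally show ?thesis .
qed

lemma N_pts_mat_inv:
  assumes n: "n \<in> N_pts r d"
  shows "mat_inv r d c n \<in> N_pts r d" and "mat_mul r d c n (mat_inv r d c n) = mat_one r d"
    and "mat_mul r d c (mat_inv r d c n) n = mat_one r d"
proof -
  define S where "S = neumann_inv r d c n"
  have S: "S \<in> N_pts r d" "mat_mul r d c n S = mat_one r d"
    unfolding S_def using neumann_inv_in_N_pts mat_mul_neumann_inv n by blast+
  define S' where "S' = neumann_inv r d c S"
  have S': "S' \<in> N_pts r d" "mat_mul r d c S S' = mat_one r d"
    unfolding S'_def using neumann_inv_in_N_pts mat_mul_neumann_inv S(1) by blast+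
  \<comment> \<open>a right inverse of a right inverse is the element itself\<close>
  have "n = mat_mul r d c (mat_mul r d c n S) S'"
    using S'(2) N_pts_supp_ok[OF n] by (simp add: mat_mul_assoc mat_mul_one_right)
  also have "\<dots> = S'" using S(2) N_pts_supp_ok[OF S'(1)] by (simp add: mat_mul_one_left)
  finally have "mat_mul r d c S n = mat_one r d" using S'(2) by simp
  then have "mat_inv r d c n = S" using mat_inv_eqI N_pts_supp_ok[OF S(1)] S(2) by blast
  then show "mat_inv r d c n \<in> N_pts r d" "mat_mul r d c n (mat_inv r d c n) = mat_one r d"
    "mat_mul r d c (mat_inv r d c n) n = mat_one r d"
    using S \<open>mat_mul r d c S n = mat_one r d\<close> by simp_all
qed

lemma mat_inv_mul:
  assumes "a \<in> N_pts r d" "b \<in> N_pts r d"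
  shows "mat_inv r d c (mat_mul r d c a b) = mat_mul r d c (mat_inv r d c b) (mat_inv r d c a)"
proof (rule mat_inv_eqI)
  note inv = N_pts_mat_inv[OF assms(1), of c] N_pts_mat_inv[OF assms(2), of c]
  show "mat_mul r d c (mat_mul r d c a b) (mat_mul r d c (mat_inv r d c b) (mat_inv r d c a))
      = mat_one r d"
    using inv N_pts_supp_ok by (metis mat_mul_assoc mat_mul_one_left)
  show "mat_mul r d c (mat_mul r d c (mat_inv r d c b) (mat_inv r d c a)) (mat_mul r d c a b)
      = mat_one r d"
    using inv N_pts_supp_ok assms by (metis mat_mul_assoc mat_mul_one_left)
qed (rule supp_ok_mat_mul)

section \<open>Fibres of phi\<close>

lemma conj_mul:
  assumes "a \<in> N_pts r d" "b \<in> N_pts r d"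
  shows "conj r d c (mat_mul r d c a b) A = conj r d c a (conj r d c b A)"
  by (simp add: conj_def mat_inv_mul[OF assms] mat_sig_mul mat_mul_assoc)

lemma conj_mat_inv_conj:
  assumes "n \<in> N_pts r d" "supp_ok r d A"
  shows "conj r d c (mat_inv r d c n) (conj r d c n A) = A"
proof -
  have "mat_inv r d c (mat_one r d) = (mat_one r d :: 'a mat)"
    by (intro mat_inv_eqI supp_ok_mat_one) (simp_all add: mat_mul_one_left supp_ok_mat_one)
  then have "conj r d c (mat_one r d) A = A"
    using assms(2) by (simp add: conj_def mat_sig_one mat_mul_one_left mat_mul_one_right)
  then show ?thesis
    using conj_mul[OF N_pts_mat_inv(1) assms(1)] N_pts_mat_inv(3) assms(1) by metis
qed

lemma phi_eq_iff_conj_eq: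
  "phi r d c n = phi r d c n' \<longleftrightarrow> conj r d c n (Xmat r d) = conj r d c n' (Xmat r d)"
  unfolding phi_def mat_minus_def by (simp add: fun_eq_iff)

lemma phi_eq_iff_coset:
  assumes n: "n \<in> N_pts r d" and n': "n' \<in> N_pts r d"
  shows "phi r d c n = phi r d c n' \<longleftrightarrow> (\<exists>m\<in>NX_pts r d c. n' = mat_mul r d c n m)"
  unfolding phi_eq_iff_conj_eq
proof
  let ?X = "Xmat r d" and ?g = "mat_inv r d c n"
  assume eq: "conj r d c n ?X = conj r d c n' ?X"
  define m where "m = mat_mul r d c ?g n'"
  have m: "m \<in> N_pts r d" using N_pts_mul[OF N_pts_mat_inv(1)[OF n] n'] by (simp add: m_def)
  have "mat_mul r d c n m = n'"
    using N_pts_mat_inv(2)[OF n] N_pts_supp_ok[OF n']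
    by (simp add: m_def mat_mul_assoc[symmetric] mat_mul_one_left)
  moreover have "conj r d c m ?X = ?X"
    using conj_mul[OF N_pts_mat_inv(1)[OF n] n'] conj_mat_inv_conj[OF n supp_ok_Xmat, where c = c] eq
    by (simp add: m_def)
  ultimately show "\<exists>m\<in>NX_pts r d c. n' = mat_mul r d c n m"
    using m by (auto simp: NX_pts_def)
next
  assume "\<exists>m\<in>NX_pts r d c. n' = mat_mul r d c n m"
  then obtain m where "m \<in> N_pts r d" "conj r d c m (Xmat r d) = Xmat r d" "n' = mat_mul r d c n m"
    by (auto simp: NX_pts_def)
  then show "conj r d c n (Xmat r d) = conj r d c n' (Xmat r d)"
    using conj_mul[OF n] by simp
qed

section \<open>The image of phi lies in u_X\<close>

lemma mat_mul_Xmat_entry: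
  assumes "p \<in> Idx r d" "l \<in> Idx r d"
  shows "mat_mul r d c n (Xmat r d) p l = (if 1 < fst l then n p (idx_down l) else 0)"
proof -
  have "mat_mul r d c n (Xmat r d) p l
      = (\<Sum>m\<in>Idx r d. if m = idx_down l then (if 1 < fst l then n p (idx_down l) else 0) else 0)"
    using assms by (auto simp: mat_mul_def Xmat_def idx_down_def intro!: sum.cong)
  then show ?thesis
    using idx_down_in_Idx[OF assms(2)] by (cases "1 < fst l") (simp_all add: sum_Idx_delta)
qed

lemma N_pts_mul_Xmat_off_uX:
  assumes n: "n \<in> N_pts r d" and pq: "p \<in> Idx r d" "q \<in> Idx r d" and off: "\<not> u_block q p"
  shows "mat_mul r d c n (Xmat r d) p q = Xmat r d p q"
proof (cases "1 < fst q")
  case True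
  have "n p (idx_down q) = (if p = idx_down q then eone else 0)"
    using N_pts_diag[OF n idx_down_in_Idx[OF pq(2) True]] N_pts_nonzeroD[OF n, of p "idx_down q"]
      off True
    unfolding u_block_iff_idx_less by auto
  moreover have "mat_mul r d c n (Xmat r d) p q = n p (idx_down q)"
    using mat_mul_Xmat_entry[OF pq, of c n] True by simp
  ultimately show ?thesis using pq True by (simp add: Xmat_def idx_down_def)
next
  case False
  then show ?thesis using mat_mul_Xmat_entry[OF pq, of c n] by (simp add: Xmat_def)
qed

lemma conj_Xmat_off_uX:
  assumes n: "n \<in> N_pts r d" and pq: "p \<in> Idx r d" "q \<in> Idx r d" and off: "\<not> u_block q p"
  shows "conj r d c n (Xmat r d) p q = Xmat r d p q"
proof -
  let ?g = "mat_inv r d c n"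
  have g: "?g \<in> N_pts r d" by (rule N_pts_mat_inv(1)[OF n])
  have "emul c (mat_mul r d c n (Xmat r d) p l) (esig (?g l q)) = (if l = q then Xmat r d p q else 0)"
    if l: "l \<in> Idx r d" for l
  proof (cases "l = q")
    case False
    have "mat_mul r d c n (Xmat r d) p l = 0 \<or> ?g l q = 0"
    proof (rule ccontr)
      assume "\<not> ?thesis"
      then have l1: "1 < fst l" and "n p (idx_down l) \<noteq> 0" "?g l q \<noteq> 0"
        using mat_mul_Xmat_entry[OF pq(1) l, of c n] by (auto split: if_splits)
      then have "p = idx_down l \<or> idx_less p (idx_down l)" "idx_less l q"
        using N_pts_nonzeroD[OF n] N_pts_nonzeroD[OF g] False by blast+
      moreover have "idx_less (idx_down l) (idx_down q)" by (rule idx_less_down) fact+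
      ultimately have "idx_less p (idx_down q)" using idx_less_trans by blast
      moreover have "1 < fst q" using idx_less_fst_le[OF \<open>idx_less l q\<close>] l1 by simp
      ultimately show False using off unfolding u_block_iff_idx_less by blast
    qed
    with False show ?thesis by auto
  qed (simp add: N_pts_mul_Xmat_off_uX[OF n pq off] N_pts_diag[OF g pq(2)])
  then show ?thesis
    using pq by (simp add: conj_def mat_mul_def mat_sig_def sum_Idx_delta cong: sum.cong)
qed

lemma phi_in_uX_pts:
  assumes n: "n \<in> N_pts r d" shows "phi r d c n \<in> uX_pts r d"
proof -
  have "supp_ok r d (phi r d c n)"
    unfolding phi_def conj_def by (intro supp_ok_mat_minus supp_ok_mat_mul supp_ok_Xmat)
  then show ?thesis
    by (simp add: uX_pts_def phi_def mat_minus_def conj_Xmat_off_uX[OF n])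
qed

section \<open>Surjectivity onto u_X\<close>

lemma uX_pts_nonzeroD:
  "Y \<in> uX_pts r d \<Longrightarrow> Y p q \<noteq> 0 \<Longrightarrow> p \<in> Idx r d \<and> q \<in> Idx r d \<and> u_block q p"
  unfolding uX_pts_def using supp_okD by blast

definition unitri_col ::
    "nat \<Rightarrow> (nat \<Rightarrow> nat) \<Rightarrow> (nat \<times> nat \<times> nat \<Rightarrow> 'r::comm_ring_1 ER) \<Rightarrow> nat \<times> nat \<times> nat \<Rightarrow> bool"
  where "unitri_col r d v q \<longleftrightarrow> v q = eone \<and> (\<forall>p. v p \<noteq> 0 \<longrightarrow> p \<in> Idx r d \<and> (p = q \<or> idx_less p q))"

lemma unitri_col_in_Idx: "unitri_col r d v q \<Longrightarrow> q \<in> Idx r d"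
  unfolding unitri_col_def using eone_neq_0 by metis

lemma N_ptsI_columns:
  assumes "\<And>q. q \<in> Idx r d \<Longrightarrow> unitri_col r d (\<lambda>p. n p q) q"
    and "\<And>p q. q \<notin> Idx r d \<Longrightarrow> n p q = 0"
  shows "n \<in> N_pts r d"
proof (rule N_ptsI)
  show "supp_ok r d n"
    unfolding supp_ok_def using assms unfolding unitri_col_def by metis
  show "n p p = eone" if "p \<in> Idx r d" for p
    using assms(1)[OF that] by (simp add: unitri_col_def)
  show "p = q \<or> idx_less p q" if "n p q \<noteq> 0" for p q
    using assms that unfolding unitri_col_def by metis
qed

definition slin_apply :: "nat \<Rightarrow> (nat \<Rightarrow> nat) \<Rightarrow> 'r::comm_ring_1 \<Rightarrow> 'r mat \<Rightarrow>
    (nat \<times> nat \<times> nat \<Rightarrow> 'r ER) \<Rightarrow> nat \<times> nat \<times> nat \<Rightarrow> 'r ER" where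
  "slin_apply r d c Z v = (\<lambda>p. if p \<in> Idx r d then \<Sum>m\<in>Idx r d. emul c (Z p m) (esig (v m)) else 0)"

definition X_plus :: "nat \<Rightarrow> (nat \<Rightarrow> nat) \<Rightarrow> 'r::comm_ring_1 mat \<Rightarrow> 'r mat" where
  "X_plus r d Y = (\<lambda>p q. Xmat r d p q + Y p q)"

lemma supp_ok_X_plus: "Y \<in> uX_pts r d \<Longrightarrow> supp_ok r d (X_plus r d Y)"
  unfolding X_plus_def uX_pts_def supp_ok_def Xmat_def by auto

lemma slin_apply_X_plus:
  "slin_apply r d c (X_plus r d Y) v p = slin_apply r d c (Xmat r d) v p + slin_apply r d c Y v p"
  by (simp add: slin_apply_def X_plus_def emul_add_left sum.distrib)

lemma slin_apply_Xmat:
  assumes "p \<in> Idx r d"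
  shows "slin_apply r d c (Xmat r d) v p = (if idx_up p \<in> Idx r d then esig (v (idx_up p)) else 0)"
proof -
  have "1 \<le> fst p" using assms by (auto simp: Idx_def)
  then have "(1 < fst m \<and> p = (fst m - 1, snd m)) \<longleftrightarrow> m = idx_up p" for m
    by (cases p; cases m) (auto simp: idx_up_def)
  then have "slin_apply r d c (Xmat r d) v p
      = (\<Sum>m\<in>Idx r d. if m = idx_up p then esig (v (idx_up p)) else 0)"
    using assms by (auto simp: slin_apply_def Xmat_def intro!: sum.cong)
  then show ?thesis using finite_Idx by (simp add: sum.delta')
qed

lemma slin_apply_uX_nonzeroD:
  assumes Y: "Y \<in> uX_pts r d" and v: "unitri_col r d v q" and ne: "slin_apply r d c Y v p \<noteq> 0"
  shows "1 < fst q \<and> idx_less p (idx_down q)"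
proof -
  obtain m where "emul c (Y p m) (esig (v m)) \<noteq> 0"
    using ne by (auto simp: slin_apply_def split: if_splits elim: sum_neq_0_obtain)
  then have "Y p m \<noteq> 0" "v m \<noteq> 0" by auto
  then have m: "1 < fst m" "idx_less p (idx_down m)" and "m = q \<or> idx_less m q"
    using uX_pts_nonzeroD[OF Y] v unfolding u_block_iff_idx_less unitri_col_def by blast+
  from this(3) show ?thesis
  proof
    assume "idx_less m q"
    with m show ?thesis
      using idx_less_down idx_less_trans idx_less_fst_le[of m q] by fastforce
  qed (use m in simp)
qed

lemma slin_apply_X_plus_unitri_col:
  assumes Y: "Y \<in> uX_pts r d" and v: "unitri_col r d v q" and q1: "1 < fst q"
  shows "unitri_col r d (slin_apply r d c (X_plus r d Y) v) (idx_down q)"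
proof -
  let ?w = "slin_apply r d c (X_plus r d Y) v"
  have q: "q \<in> Idx r d" by (rule unitri_col_in_Idx[OF v])
  have dq: "idx_down q \<in> Idx r d" by (rule idx_down_in_Idx[OF q q1])
  have "slin_apply r d c Y v (idx_down q) = 0"
    using slin_apply_uX_nonzeroD[OF Y v, of c "idx_down q"] idx_less_irrefl by blast
  then have "?w (idx_down q) = eone"
    using v q
    by (simp add: slin_apply_X_plus slin_apply_Xmat[OF dq] idx_up_down[OF q1] unitri_col_def)
  moreover have "p \<in> Idx r d \<and> (p = idx_down q \<or> idx_less p (idx_down q))" if ne: "?w p \<noteq> 0" for p
  proof -
    have p: "p \<in> Idx r d" using ne by (auto simp: slin_apply_def split: if_splits)
    have "slin_apply r d c Y v p \<noteq> 0 \<or> v (idx_up p) \<noteq> 0"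
    proof (rule ccontr)
      assume "\<not> ?thesis"
      then have "?w p = 0" by (simp add: slin_apply_X_plus slin_apply_Xmat[OF p])
      with ne show False by contradiction
    qed
    then show ?thesis
    proof
      assume "v (idx_up p) \<noteq> 0"
      then have "idx_up p = q \<or> idx_less (idx_up p) q"
        using v unfolding unitri_col_def by blast
      moreover have "1 < fst (idx_up p)" using p by (auto simp: idx_up_def Idx_def)
      ultimately show ?thesis
        using idx_less_down[of "idx_up p" q] p by auto
    qed (use slin_apply_uX_nonzeroD[OF Y v] p in blast)
  qed
  ultimately show ?thesis unfolding unitri_col_def by blast
qed

lemma slin_apply_X_plus_vanishes:
  assumes Y: "Y \<in> uX_pts r d" and v: "unitri_col r d v q" and q1: "fst q = 1"
  shows "slin_apply r d c (X_plus r d Y) v = (\<lambda>p. 0)"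
proof
  fix p
  show "slin_apply r d c (X_plus r d Y) v p = 0"
  proof (cases "p \<in> Idx r d")
    case True
    have "v (idx_up p) = 0"
    proof (rule ccontr)
      assume "v (idx_up p) \<noteq> 0"
      then have "idx_up p = q \<or> idx_less (idx_up p) q"
        using v unfolding unitri_col_def by blast
      moreover have "fst (idx_up p) = fst p + 1" "1 \<le> fst p"
        using True by (auto simp: idx_up_def Idx_def)
      ultimately show False using q1 idx_less_fst_le by fastforce
    qed
    moreover have "slin_apply r d c Y v p = 0"
      using slin_apply_uX_nonzeroD[OF Y v, of c p] q1 by linarith
    ultimately show ?thesis using True by (simp add: slin_apply_X_plus slin_apply_Xmat)
  qed (simp add: slin_apply_def)
qed

definition uX_column ::
    "nat \<Rightarrow> (nat \<Rightarrow> nat) \<Rightarrow> 'r::comm_ring_1 \<Rightarrow> 'r mat \<Rightarrow> nat \<Rightarrow> nat \<Rightarrow> nat \<Rightarrow> nat \<times> nat \<times> nat \<Rightarrow> 'r ER"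
  where "uX_column r d c Y j k s =
           (slin_apply r d c (X_plus r d Y) ^^ s) (\<lambda>p. if p = (j, j, k) then eone else 0)"

lemma uX_column_unitri_col:
  assumes Y: "Y \<in> uX_pts r d" and jk: "(j, j, k) \<in> Idx r d" and "s < j"
  shows "unitri_col r d (uX_column r d c Y j k s) (j - s, j, k)"
  using \<open>s < j\<close>
proof (induction s)
  case 0
  with jk show ?case by (simp add: uX_column_def unitri_col_def)
next
  case (Suc s)
  then have "unitri_col r d (uX_column r d c Y j k s) (j - s, j, k)" "1 < fst (j - s, j, k)"
    by simp_all
  from slin_apply_X_plus_unitri_col[OF Y this] show ?case
    by (simp add: uX_column_def idx_down_def)
qed

lemma uX_column_vanishes:
  assumes Y: "Y \<in> uX_pts r d" and jk: "(j, j, k) \<in> Idx r d"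
  shows "uX_column r d c Y j k j = (\<lambda>p. 0)"
proof -
  have j: "j = Suc (j - 1)" using jk by (simp add: Idx_def)
  have "unitri_col r d (uX_column r d c Y j k (j - 1)) (1, j, k)"
    using uX_column_unitri_col[OF Y jk, of "j - 1" c] j by simp
  from slin_apply_X_plus_vanishes[OF Y this] show ?thesis
    by (subst j) (simp add: uX_column_def)
qed

definition uX_preimage :: "nat \<Rightarrow> (nat \<Rightarrow> nat) \<Rightarrow> 'r::comm_ring_1 \<Rightarrow> 'r mat \<Rightarrow> 'r mat" where
  "uX_preimage r d c Y =
     (\<lambda>p (i, j, k). if (i, j, k) \<in> Idx r d then uX_column r d c Y j k (j - i) p else 0)"

lemma uX_preimage_in_N_pts:
  assumes Y: "Y \<in> uX_pts r d"
  shows "uX_preimage r d c Y \<in> N_pts r d"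
proof (rule N_ptsI_columns)
  fix q assume q: "q \<in> Idx r d"
  obtain i j k where ijk: "q = (i, j, k)" by (cases q)
  with q have "(j, j, k) \<in> Idx r d" "j - i < j" "j - (j - i) = i" by (auto simp: Idx_def)
  from uX_column_unitri_col[OF Y this(1,2), of c] this(3)
  show "unitri_col r d (\<lambda>p. uX_preimage r d c Y p q) q"
    using q by (simp add: uX_preimage_def ijk)
qed (auto simp: uX_preimage_def)

lemma mat_mul_mat_sig_column:
  "p \<in> Idx r d \<Longrightarrow> q \<in> Idx r d \<Longrightarrow>
    mat_mul r d c Z (mat_sig n) p q = slin_apply r d c Z (\<lambda>m. n m q) p"
  by (simp add: mat_mul_def mat_sig_def slin_apply_def)

lemma uX_preimage_intertwines:
  assumes Y: "Y \<in> uX_pts r d"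
  shows "mat_mul r d c (uX_preimage r d c Y) (Xmat r d)
       = mat_mul r d c (X_plus r d Y) (mat_sig (uX_preimage r d c Y))"
proof (intro ext)
  fix p q
  let ?n = "uX_preimage r d c Y"
  show "mat_mul r d c ?n (Xmat r d) p q = mat_mul r d c (X_plus r d Y) (mat_sig ?n) p q"
  proof (cases "p \<in> Idx r d \<and> q \<in> Idx r d")
    case True
    obtain i j k where ijk: "q = (i, j, k)" by (cases q)
    have i: "1 \<le> i" "i \<le> j" and jk: "(j, j, k) \<in> Idx r d" using True by (auto simp: ijk Idx_def)
    have "mat_mul r d c (X_plus r d Y) (mat_sig ?n) p q = uX_column r d c Y j k (Suc (j - i)) p"
      using True by (simp add: mat_mul_mat_sig_column uX_preimage_def ijk uX_column_def)
    moreover have "mat_mul r d c ?n (Xmat r d) p q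
        = (if 1 < i then uX_column r d c Y j k (j - (i - 1)) p else 0)"
      using True mat_mul_Xmat_entry[of p r d q c ?n] idx_down_in_Idx[of q r d]
      by (simp add: ijk idx_down_def uX_preimage_def)
    moreover have "Suc (j - i) = j" if "\<not> 1 < i" using that i by simp
    ultimately show ?thesis
      using uX_column_vanishes[OF Y jk, of c] i by (auto simp: Suc_diff_le)
  qed (auto simp: mat_mul_def)
qed

lemma phi_uX_preimage:
  assumes Y: "Y \<in> uX_pts r d"
  shows "phi r d c (uX_preimage r d c Y) = Y"
proof -
  let ?n = "uX_preimage r d c Y"
  have n: "?n \<in> N_pts r d" by (rule uX_preimage_in_N_pts[OF Y])
  have "conj r d c ?n (Xmat r d)
      = mat_mul r d c (X_plus r d Y) (mat_sig (mat_mul r d c ?n (mat_inv r d c ?n)))"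
    by (simp add: conj_def uX_preimage_intertwines[OF Y] mat_mul_assoc mat_sig_mul)
  also have "\<dots> = X_plus r d Y"
    by (simp add: N_pts_mat_inv(2)[OF n] mat_sig_one mat_mul_one_right supp_ok_X_plus[OF Y])
  finally show ?thesis by (simp add: phi_def mat_minus_def X_plus_def)
qed

theorem lemma2p6p1:
  fixes \<delta> :: "'f::field_char_0" and \<iota> :: "'f \<Rightarrow> 'r::comm_ring_1"
    and r :: nat and d :: "nat \<Rightarrow> nat"
  assumes "r \<ge> 1"
    and "\<not> (\<exists>x. x * x = \<delta>)"
    and "\<iota> 0 = 0" and "\<iota> 1 = 1"
    and "\<forall>a b. \<iota> (a + b) = \<iota> a + \<iota> b"
    and "\<forall>a b. \<iota> (a * b) = \<iota> a * \<iota> b"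
  shows "(\<forall>n\<in>N_pts r d. phi r d (\<iota> \<delta>) n \<in> uX_pts r d)
       \<and> (\<forall>Y\<in>uX_pts r d. \<exists>n\<in>N_pts r d. phi r d (\<iota> \<delta>) n = Y)
       \<and> (\<forall>n\<in>N_pts r d. \<forall>n'\<in>N_pts r d.
            phi r d (\<iota> \<delta>) n = phi r d (\<iota> \<delta>) n'
              \<longleftrightarrow> (\<exists>m\<in>NX_pts r d (\<iota> \<delta>). n' = mat_mul r d (\<iota> \<delta>) n m))"
  using phi_in_uX_pts uX_preimage_in_N_pts phi_uX_preimage phi_eq_iff_coset by blast

end
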